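(* For all integers $n\ge2$, $$\mathcal A_{2n-3}\cap\gamma_{n+1}(\mathcal R)=\mathcal A_{2n-1}.$$
   Context: $\mathcal R=\mathcal R(\mathbb F_2)$ is the Riordan group of pairs $(g,f)$ of formal power series over $\mathbb F_2$ with $g=1+\cdots$, $f=t+\cdots$, product $(g_1,f_1)(g_2,f_2)=(g_1\cdot(g_2\circ f_1),\,f_2\circ f_1)$; it is a pro-2 group with the $t$-adic topology. $\mathcal A=\{(g,t)\}$ is the Appell subgroup and $\mathcal A_m=\{(g,t):g\equiv1\pmod{t^{m+1}}\}$. The lower central series is $\gamma_1(\mathcal R)=\mathcal R$, $\gamma_i(\mathcal R)=[\gamma_{i-1}(\mathcal R),\mathcal R]$, where $[X,Y]$ is the smallest closed subgroup containing all commutators $x^{-1}y^{-1}xy$, $x\in X$, $y\in Y$. *)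

theory Defs
  imports "HOL-Library.Z2" "HOL-Computational_Algebra.Formal_Power_Series" "HOL-Algebra.Group"
begin

definition riordan :: "(bit fps \<times> bit fps) monoid" where
  "riordan = \<lparr> carrier = {(g, f). fps_nth (g) 0 = 1 \<and> fps_nth (f) 0 = 0 \<and> fps_nth (f) 1 = 1},
               mult = (\<lambda>(g1, f1) (g2, f2). (g1 * (g2 oo f1), f2 oo f1)),
               one = (1, fps_X) \<rparr>"

text \<open>Closedness in the t-adic topology (product topology on pairs of series):
  a set S is closed iff every point of the group that is approximated arbitrarily
  well (agreement of all coefficients below m, for every m) by points of S lies in S.\<close>
definition tadic_closed :: "(bit fps \<times> bit fps) set \<Rightarrow> bool" where
  "tadic_closed S \<longleftrightarrow> S \<subseteq> carrier riordan \<and>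
     (\<forall>p \<in> carrier riordan.
        (\<forall>m::nat. \<exists>s \<in> S. \<forall>k<m. fps_nth (fst s) k = fps_nth (fst p) k \<and> fps_nth (snd s) k = fps_nth (snd p) k)
        \<longrightarrow> p \<in> S)"

definition commutator :: "bit fps \<times> bit fps \<Rightarrow> bit fps \<times> bit fps \<Rightarrow> bit fps \<times> bit fps" where
  "commutator x y = inv\<^bsub>riordan\<^esub> x \<otimes>\<^bsub>riordan\<^esub> inv\<^bsub>riordan\<^esub> y
                      \<otimes>\<^bsub>riordan\<^esub> x \<otimes>\<^bsub>riordan\<^esub> y"

definition comm_sub :: "(bit fps \<times> bit fps) set \<Rightarrow> (bit fps \<times> bit fps) set \<Rightarrow> (bit fps \<times> bit fps) set" where
  "comm_sub X Y = \<Inter> {H. subgroup H riordan \<and> tadic_closed H \<and>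
                          {commutator x y | x y. x \<in> X \<and> y \<in> Y} \<subseteq> H}"

primrec lcs :: "nat \<Rightarrow> (bit fps \<times> bit fps) set" where
  "lcs 0 = carrier riordan"
| "lcs (Suc i) = comm_sub (lcs i) (carrier riordan)"

definition gamma :: "nat \<Rightarrow> (bit fps \<times> bit fps) set" where
  "gamma i = lcs (i - 1)"

definition appell :: "nat \<Rightarrow> (bit fps \<times> bit fps) set" where
  "appell m = {(g, fps_X) | g. \<forall>k\<le>m. fps_nth (g) k = fps_nth ((1 :: bit fps)) k}"

end

theory Submission
  imports Defs
begin

text \<open>Let \<open>R\<^sub>k\<close> (\<open>riordan_level k\<close>) consist of the \<open>(g, f)\<close> with \<open>g \<equiv> 1 mod t\<^sup>k\<close> and
  \<open>f \<equiv> t mod t\<^sup>k\<^sup>+\<^sup>2\<close>; these are closed subgroups. Over \<open>F\<^sub>2\<close> every \<open>h = t + \<dots>\<close> satisfies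
  \<open>h\<^sup>2 \<equiv> t\<^sup>2 mod t\<^sup>4\<close>, and this gives \<open>[R\<^sub>2\<^sub>n, R] \<subseteq> R\<^sub>2\<^sub>n\<^sub>+\<^sub>2\<close>, hence
  \<open>\<gamma>\<^sub>n\<^sub>+\<^sub>1(R) \<subseteq> R\<^sub>2\<^sub>n\<close>: the inclusion from left to right.
  Conversely, for odd \<open>m < N\<close> the commutator of \<open>(1 + t\<^sup>m, t)\<close> with \<open>(1, t + t\<^sup>N\<^sup>-\<^sup>m\<^sup>+\<^sup>1)\<close>
  is \<open>(1 + t\<^sup>N + O(t\<^sup>N\<^sup>+\<^sup>1), t)\<close>, because \<open>(1 + t\<^sup>j)\<^sup>m \<equiv> 1 + t\<^sup>j mod t\<^sup>2\<^sup>j\<close> for odd \<open>m\<close>.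
  Products of these commutators approximate every element of \<open>A\<^sub>m\<close>, so by closedness
  \<open>A\<^sub>m \<subseteq> [S, R]\<close> whenever \<open>(1 + t\<^sup>m, t) \<in> S\<close>, and induction gives
  \<open>A\<^sub>2\<^sub>n\<^sub>-\<^sub>1 \<subseteq> \<gamma>\<^sub>n\<^sub>+\<^sub>1(R)\<close>.\<close>

unbundle fps_syntax

section \<open>Power series over \<open>F\<^sub>2\<close> and congruences modulo \<open>t\<^sup>k\<close>\<close>

lemma bit_add_self [simp]: "(x::bit) + x = 0"
  by (cases x) simp_all

lemma bit_neq_imp_add_one: "(a::bit) \<noteq> b \<Longrightarrow> a + 1 = b"
  by (cases a; cases b) simp_all

lemma fps_bit_add_self [simp]: "(p::bit fps) + p = 0"
  by (rule fps_ext) (simp only: fps_add_nth bit_add_self fps_zero_nth)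

lemma fps_bit_two [simp]: "(2::bit fps) = 0"
  by (metis one_add_one fps_bit_add_self)

lemma fps_bit_add_square: "((p::bit fps) + q) ^ 2 = p ^ 2 + q ^ 2"
  by (simp add: power2_eq_square algebra_simps)

definition fps_cong :: "nat \<Rightarrow> 'a fps \<Rightarrow> 'a fps \<Rightarrow> bool" where
  "fps_cong k p q \<longleftrightarrow> (\<forall>i<k. p $ i = q $ i)"

lemma fps_cong_refl [simp]: "fps_cong k p p"
  by (simp add: fps_cong_def)

lemma fps_cong_sym: "fps_cong k p q \<Longrightarrow> fps_cong k q p"
  by (simp add: fps_cong_def)

lemma fps_cong_trans [trans]: "fps_cong k p q \<Longrightarrow> fps_cong k q r \<Longrightarrow> fps_cong k p r"
  by (simp add: fps_cong_def)

lemma fps_cong_mono: "fps_cong k p q \<Longrightarrow> j \<le> k \<Longrightarrow> fps_cong j p q"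
  by (simp add: fps_cong_def)

lemma fps_cong_Suc: "fps_cong (Suc k) p q \<longleftrightarrow> fps_cong k p q \<and> p $ k = q $ k"
  by (auto simp: fps_cong_def less_Suc_eq)

lemma fps_cong_add:
  "fps_cong k p q \<Longrightarrow> fps_cong k r s \<Longrightarrow> fps_cong k (p + r) (q + (s :: 'a::monoid_add fps))"
  by (simp add: fps_cong_def)

lemma fps_cong_add_X_power_mult: "fps_cong k (p + fps_X ^ k * r) (p :: 'a::comm_ring_1 fps)"
  by (simp add: fps_cong_def fps_X_power_mult_nth)

lemma fps_cong_iff_dvd:
  fixes p q :: "'a::comm_ring_1 fps"
  shows "fps_cong k p q \<longleftrightarrow> fps_X ^ k dvd (p - q)"
proof
  assume "fps_X ^ k dvd (p - q)"
  then obtain r where "p = q + fps_X ^ k * r"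
    by (metis add.commute diff_add_cancel dvdE)
  then show "fps_cong k p q" by (simp add: fps_cong_add_X_power_mult)
next
  assume cong: "fps_cong k p q"
  show "fps_X ^ k dvd (p - q)"
  proof (cases "p = q")
    case False
    then have "subdegree (p - q) \<ge> k"
      using cong by (intro subdegree_geI) (auto simp: fps_cong_def)
    then have "fps_shift k (p - q) * fps_X ^ k = p - q"
      by (rule fps_shift_times_fps_X_power)
    then show ?thesis by (metis dvd_triv_right)
  qed simp
qed

lemma fps_congE:
  fixes p q :: "'a::comm_ring_1 fps"
  assumes "fps_cong k p q"
  obtains r where "p = q + fps_X ^ k * r"
  using assms unfolding fps_cong_iff_dvd by (metis add.commute diff_add_cancel dvdE)

lemma fps_cong_mult:
  fixes p q r s :: "'a::comm_ring_1 fps"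
  assumes "fps_cong k p q" "fps_cong k r s"
  shows "fps_cong k (p * r) (q * s)"
proof -
  have "fps_X ^ k dvd (p - q) * r + q * (r - s)"
    using assms by (simp add: fps_cong_iff_dvd)
  moreover have "(p - q) * r + q * (r - s) = p * r - q * s"
    by (simp add: algebra_simps)
  ultimately show ?thesis by (simp add: fps_cong_iff_dvd)
qed

lemma fps_cong_power: "fps_cong k p q \<Longrightarrow> fps_cong k (p ^ n) (q ^ n :: 'a::comm_ring_1 fps)"
  by (induction n) (auto intro: fps_cong_mult)

lemma fps_cong_X_power_mult:
  fixes p q :: "'a::comm_ring_1 fps"
  assumes "fps_cong k p q"
  shows "fps_cong (j + k) (fps_X ^ j * p) (fps_X ^ j * q)"
proof -
  obtain r where "p = q + fps_X ^ k * r" using assms by (rule fps_congE)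
  then have "fps_X ^ j * p = fps_X ^ j * q + fps_X ^ (j + k) * r"
    by (simp add: algebra_simps power_add)
  then show ?thesis by (simp add: fps_cong_add_X_power_mult)
qed

lemma fps_cong_zero_mult:
  fixes p q :: "'a::comm_ring_1 fps"
  assumes "fps_cong j p 0" "fps_cong k q 0"
  shows "fps_cong (j + k) (p * q) 0"
proof -
  obtain r s where "p = fps_X ^ j * r" "q = fps_X ^ k * s"
    using assms by (metis fps_congE add_0)
  then have "p * q = 0 + fps_X ^ (j + k) * (r * s)"
    by (simp add: algebra_simps power_add)
  then show ?thesis
    by (simp only: fps_cong_add_X_power_mult)
qed

lemma fps_cong_mult_cancel:
  fixes p q u :: "'a::field fps"
  assumes "u $ 0 \<noteq> 0" "fps_cong k (u * p) (u * q)"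
  shows "fps_cong k p q"
proof -
  have inv_u: "inverse u * (u * r) = r" for r
    using inverse_mult_eq_1[OF assms(1)] by (simp add: mult.assoc[symmetric])
  have "fps_cong k (inverse u * (u * p)) (inverse u * (u * q))"
    using fps_cong_refl assms(2) by (rule fps_cong_mult)
  then show ?thesis by (simp only: inv_u)
qed

lemma fps_cong_compose_right:
  fixes f g :: "'a::comm_ring_1 fps"
  assumes "fps_cong k f g"
  shows "fps_cong k (p oo f) (p oo g)"
  using fps_cong_power[OF assms] by (simp add: fps_cong_def fps_compose_nth)

lemma fps_cong_compose_left:
  fixes p q b :: "'a::idom fps"
  assumes "b $ 0 = 0" "fps_cong k p q"
  shows "fps_cong k (p oo b) (q oo b)"
proof -
  obtain r where r: "p = q + fps_X ^ k * r" using assms(2) by (rule fps_congE)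
  have "fps_X dvd b" using assms(1) fps_cong_iff_dvd[of 1 b 0] by (simp add: fps_cong_def)
  then have "fps_X ^ k dvd b ^ k" by (rule dvd_power_same)
  moreover have "p oo b = (q oo b) + b ^ k * (r oo b)"
    using assms(1) by (simp add: r fps_compose_add_distrib fps_compose_mult_distrib fps_X_power_compose)
  ultimately show ?thesis by (auto simp: fps_cong_iff_dvd)
qed

lemma fps_cong_compose_cancel:
  fixes p q h :: "'a::field fps"
  assumes "h $ 0 = 0" "h $ 1 \<noteq> 0" "fps_cong k (p oo h) (q oo h)"
  shows "fps_cong k p q"
proof -
  have inv_h0: "fps_inv h $ 0 = 0" by (simp add: fps_inv_def)
  have inv_h: "r oo h oo fps_inv h = r" for r
    using fps_compose_assoc[OF inv_h0 assms(1), of r] fps_inv_right[OF assms(1,2)] by simp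
  have "fps_cong k (p oo h oo fps_inv h) (q oo h oo fps_inv h)"
    using inv_h0 assms(3) by (rule fps_cong_compose_left)
  then show ?thesis by (simp only: inv_h)
qed

lemma fps_cong_2_X:
  fixes h :: "'a::comm_ring_1 fps"
  assumes "h $ 0 = 0" "h $ 1 = 1"
  shows "fps_cong 2 h fps_X"
  using assms by (auto simp: fps_cong_def less_2_cases_iff)

lemma fps_compose_X_power_mult_cong:
  fixes s h :: "'a::idom fps"
  assumes h0: "h $ 0 = 0" and h1: "h $ 1 = 1"
  shows "fps_cong (k + 1) ((fps_X ^ k * s) oo h) (fps_X ^ k * s)"
proof -
  obtain r where "h = fps_X + fps_X ^ 2 * r"
    using fps_cong_2_X[OF h0 h1] by (rule fps_congE)
  then have h: "h = fps_X * (1 + fps_X * r)"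
    by (simp add: algebra_simps power2_eq_square)
  have "(fps_X ^ k * s) oo h = fps_X ^ k * ((1 + fps_X * r) ^ k * (s oo h))"
    using h0 by (simp add: fps_compose_mult_distrib fps_X_power_compose)
      (simp add: h power_mult_distrib)
  moreover have "fps_cong 1 ((1 + fps_X * r) ^ k * (s oo h)) (1 ^ k * s)"
    using fps_cong_add_X_power_mult[of 1 1 r]
    by (intro fps_cong_mult fps_cong_power) (simp_all add: fps_cong_def)
  ultimately show ?thesis
    using fps_cong_X_power_mult[of 1 _ s k] by simp
qed

text \<open>Here \<open>h\<^sup>2 \<equiv> t\<^sup>2 mod t\<^sup>4\<close> because squaring is additive in characteristic 2; this gains
  one order over \<open>fps_compose_X_power_mult_cong\<close> on even powers of \<open>t\<close>.\<close>

lemma fps_bit_compose_X_even_power_mult_cong: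
  fixes s h :: "bit fps"
  assumes h0: "h $ 0 = 0" and h1: "h $ 1 = 1"
  shows "fps_cong (2 * m + 2) ((fps_X ^ (2 * m) * s) oo h) (fps_X ^ (2 * m) * s)"
proof -
  obtain r where "h = fps_X + fps_X ^ 2 * r"
    using fps_cong_2_X[OF h0 h1] by (rule fps_congE)
  then have "h ^ 2 = fps_X ^ 2 * (1 + fps_X ^ 2 * r ^ 2)"
    by (simp add: fps_bit_add_square algebra_simps power_mult_distrib)
  then have "h ^ (2 * m) = fps_X ^ (2 * m) * (1 + fps_X ^ 2 * r ^ 2) ^ m"
    by (simp add: power_mult power_mult_distrib)
  then have "(fps_X ^ (2 * m) * s) oo h = fps_X ^ (2 * m) * ((1 + fps_X ^ 2 * r ^ 2) ^ m * (s oo h))"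
    using h0 by (simp add: fps_compose_mult_distrib fps_X_power_compose mult.assoc)
  moreover have "fps_cong 2 ((1 + fps_X ^ 2 * r ^ 2) ^ m * (s oo h)) (1 ^ m * (s oo fps_X))"
    using fps_cong_add_X_power_mult[of 2 1 "r ^ 2"] fps_cong_2_X[OF h0 h1]
    by (intro fps_cong_mult fps_cong_power fps_cong_compose_right) simp_all
  ultimately show ?thesis
    using fps_cong_X_power_mult[of 2 _ s "2 * m"] by simp
qed

section \<open>The Riordan group\<close>

lemma riordan_carrier_iff: "(g, f) \<in> carrier riordan \<longleftrightarrow> g $ 0 = 1 \<and> f $ 0 = 0 \<and> f $ 1 = 1"
  by (simp add: riordan_def)

lemma riordan_mult: "(g1, f1) \<otimes>\<^bsub>riordan\<^esub> (g2, f2) = (g1 * (g2 oo f1), f2 oo f1)"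
  by (simp add: riordan_def)

lemma riordan_one: "\<one>\<^bsub>riordan\<^esub> = (1, fps_X)"
  by (simp add: riordan_def)

lemma group_riordan: "group riordan"
proof (rule groupI)
  fix x y assume "x \<in> carrier riordan" "y \<in> carrier riordan"
  then show "x \<otimes>\<^bsub>riordan\<^esub> y \<in> carrier riordan"
    by (cases x, cases y) (auto simp: riordan_carrier_iff riordan_mult fps_compose_nth fps_mult_nth)
next
  show "\<one>\<^bsub>riordan\<^esub> \<in> carrier riordan"
    by (simp add: riordan_one riordan_carrier_iff)
next
  fix x y z assume "x \<in> carrier riordan" "y \<in> carrier riordan" "z \<in> carrier riordan"
  then show "x \<otimes>\<^bsub>riordan\<^esub> y \<otimes>\<^bsub>riordan\<^esub> z = x \<otimes>\<^bsub>riordan\<^esub> (y \<otimes>\<^bsub>riordan\<^esub> z)"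
    by (cases x, cases y, cases z)
       (auto simp: riordan_carrier_iff riordan_mult fps_compose_mult_distrib fps_compose_assoc mult.assoc)
next
  fix x assume "x \<in> carrier riordan"
  then show "\<one>\<^bsub>riordan\<^esub> \<otimes>\<^bsub>riordan\<^esub> x = x"
    by (cases x) (auto simp: riordan_carrier_iff riordan_mult riordan_one)
next
  fix x assume x: "x \<in> carrier riordan"
  obtain g f where gf: "x = (g, f)" by (cases x)
  have g0: "g $ 0 = 1" and f0: "f $ 0 = 0" and f1: "f $ 1 = 1"
    using x by (auto simp: gf riordan_carrier_iff)
  have fi0: "fps_inv f $ 0 = 0" and fi1: "fps_inv f $ 1 = 1"
    using f1 by (simp_all add: fps_inv_def numeral_eq_Suc)
  let ?y = "(inverse (g oo fps_inv f), fps_inv f)"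
  have "?y \<in> carrier riordan"
    using fi0 fi1 g0 by (simp add: riordan_carrier_iff)
  moreover have "?y \<otimes>\<^bsub>riordan\<^esub> x = \<one>\<^bsub>riordan\<^esub>"
    using inverse_mult_eq_1[of "g oo fps_inv f"] fps_inv_right[of f] g0 f0 f1
    by (simp add: gf riordan_mult riordan_one)
  ultimately show "\<exists>y\<in>carrier riordan. y \<otimes>\<^bsub>riordan\<^esub> x = \<one>\<^bsub>riordan\<^esub>" by blast
qed

interpretation R: group riordan
  by (rule group_riordan)

lemma commutator_eq_inv_mult:
  assumes "x \<in> carrier riordan" "y \<in> carrier riordan"
  shows "commutator x y = inv\<^bsub>riordan\<^esub> (y \<otimes>\<^bsub>riordan\<^esub> x) \<otimes>\<^bsub>riordan\<^esub> (x \<otimes>\<^bsub>riordan\<^esub> y)"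
  using assms by (simp add: commutator_def R.inv_mult_group R.m_assoc)

lemma riordan_inv_mult_eqD:
  assumes P: "(G, F) \<in> carrier riordan" and Q: "(G', F') \<in> carrier riordan"
    and c: "inv\<^bsub>riordan\<^esub> (G, F) \<otimes>\<^bsub>riordan\<^esub> (G', F') = (u, v)"
  shows "G * (u oo F) = G'" and "v oo F = F'"
proof -
  have "(u, v) \<in> carrier riordan"
    using P Q by (simp flip: c)
  then have "(G', F') = (G, F) \<otimes>\<^bsub>riordan\<^esub> (u, v)"
    using P Q c R.inv_solve_left' by blast
  then show "G * (u oo F) = G'" and "v oo F = F'"
    by (simp_all add: riordan_mult)
qed

section \<open>The lower central series lies in a filtration by closed subgroups\<close>

definition riordan_level :: "nat \<Rightarrow> (bit fps \<times> bit fps) set" where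
  "riordan_level k =
     {(g, f). (g, f) \<in> carrier riordan \<and> fps_cong k g 1 \<and> fps_cong (k + 2) f fps_X}"

lemma riordan_level_subset_carrier: "riordan_level k \<subseteq> carrier riordan"
  by (auto simp: riordan_level_def)

lemma inv_mult_in_riordan_level:
  assumes P: "(G, F) \<in> carrier riordan" and Q: "(G', F') \<in> carrier riordan"
    and G: "fps_cong k G G'" and F: "fps_cong (k + 2) F F'"
  shows "inv\<^bsub>riordan\<^esub> (G, F) \<otimes>\<^bsub>riordan\<^esub> (G', F') \<in> riordan_level k"
proof -
  obtain u v where c: "inv\<^bsub>riordan\<^esub> (G, F) \<otimes>\<^bsub>riordan\<^esub> (G', F') = (u, v)"
    by (metis surj_pair)
  have cC: "(u, v) \<in> carrier riordan"
    using P Q c by (metis R.inv_closed R.m_closed)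
  have G0: "G $ 0 = 1" and F0: "F $ 0 = 0" and F1: "F $ 1 = 1"
    using P by (auto simp: riordan_carrier_iff)
  have vF: "fps_cong (k + 2) (v oo F) (fps_X oo F)"
    using fps_cong_sym[OF F] F0 by (simp add: riordan_inv_mult_eqD[OF P Q c])
  have v: "fps_cong (k + 2) v fps_X"
    using fps_cong_compose_cancel[OF F0 _ vF] F1 by simp
  have GuF: "fps_cong k (G * (u oo F)) (G * (1 oo F))"
    using fps_cong_sym[OF G] by (simp add: riordan_inv_mult_eqD[OF P Q c])
  have uF: "fps_cong k (u oo F) (1 oo F)"
    using fps_cong_mult_cancel[OF _ GuF] G0 by simp
  have u: "fps_cong k u 1"
    using fps_cong_compose_cancel[OF F0 _ uF] F1 by simp
  show ?thesis
    using cC u v by (simp add: c riordan_level_def)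
qed

lemma subgroup_riordan_level: "subgroup (riordan_level k) riordan"
proof (rule R.subgroupI)
  show "riordan_level k \<subseteq> carrier riordan"
    by (rule riordan_level_subset_carrier)
  have "(1, fps_X) \<in> riordan_level k"
    by (simp add: riordan_level_def riordan_carrier_iff)
  then show "riordan_level k \<noteq> {}"
    by blast
next
  fix a assume "a \<in> riordan_level k"
  then obtain g f where a: "a = (g, f)" and aC: "(g, f) \<in> carrier riordan"
    and g: "fps_cong k g 1" and f: "fps_cong (k + 2) f fps_X"
    by (auto simp: riordan_level_def)
  have "(1, fps_X) \<in> carrier riordan"
    by (simp add: riordan_carrier_iff)
  from inv_mult_in_riordan_level[OF aC this g f]
  show "inv\<^bsub>riordan\<^esub> a \<in> riordan_level k"
    using aC by (simp add: a flip: riordan_one)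
next
  fix a b assume a: "a \<in> riordan_level k" and b: "b \<in> riordan_level k"
  obtain g1 f1 where a': "a = (g1, f1)" by (cases a)
  obtain g2 f2 where b': "b = (g2, f2)" by (cases b)
  have f10: "f1 $ 0 = 0"
    using a by (auto simp: a' riordan_level_def riordan_carrier_iff)
  have "a \<otimes>\<^bsub>riordan\<^esub> b \<in> carrier riordan"
    using a b riordan_level_subset_carrier by blast
  moreover have "fps_cong k (g1 * (g2 oo f1)) (1 * (1 oo f1))"
    using a b f10 by (intro fps_cong_mult fps_cong_compose_left) (auto simp: a' b' riordan_level_def)
  moreover have "fps_cong (k + 2) (f2 oo f1) (fps_X oo f1)"
    using b f10 by (intro fps_cong_compose_left) (auto simp: b' riordan_level_def)
  moreover have "fps_cong (k + 2) f1 fps_X"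
    using a by (auto simp: a' riordan_level_def)
  ultimately show "a \<otimes>\<^bsub>riordan\<^esub> b \<in> riordan_level k"
    using f10 by (auto simp: a' b' riordan_mult riordan_level_def intro: fps_cong_trans)
qed

lemma tadic_closed_riordan_level: "tadic_closed (riordan_level k)"
  unfolding tadic_closed_def
proof (intro conjI ballI impI)
  show "riordan_level k \<subseteq> carrier riordan"
    by (rule riordan_level_subset_carrier)
  fix p assume pC: "p \<in> carrier riordan"
    and "\<forall>m. \<exists>s\<in>riordan_level k. \<forall>i<m. fst s $ i = fst p $ i \<and> snd s $ i = snd p $ i"
  then obtain s where s: "s \<in> riordan_level k"
    and "\<forall>i<k + 2. fst s $ i = fst p $ i \<and> snd s $ i = snd p $ i"
    by blast
  then have "fps_cong (k + 2) (fst p) (fst s)" "fps_cong (k + 2) (snd p) (snd s)"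
    by (simp_all add: fps_cong_def)
  moreover have "fps_cong k (fst s) 1" "fps_cong (k + 2) (snd s) fps_X"
    using s by (auto simp: riordan_level_def)
  ultimately have "fps_cong k (fst p) 1" "fps_cong (k + 2) (snd p) fps_X"
    by (metis fps_cong_trans fps_cong_mono le_add1)+
  then show "p \<in> riordan_level k"
    using pC by (cases p) (simp add: riordan_level_def)
qed

lemma fps_bit_commutator_fst_cong:
  fixes a g f h :: "bit fps"
  assumes g: "fps_cong (2 * n) g 1" and f: "fps_cong (2 * n + 2) f fps_X"
    and h0: "h $ 0 = 0" and h1: "h $ 1 = 1"
  shows "fps_cong (2 * n + 2) (a * (g oo h)) (g * (a oo f))"
proof -
  obtain s where s: "g = 1 + fps_X ^ (2 * n) * s"
    using g by (rule fps_congE)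
  have "fps_cong (2 * n + 2) (1 + (fps_X ^ (2 * n) * s oo h)) g"
    using fps_bit_compose_X_even_power_mult_cong[OF h0 h1, of n s]
    by (simp add: s fps_cong_add)
  then have "fps_cong (2 * n + 2) (a * (g oo h)) (a * g)"
    by (intro fps_cong_mult fps_cong_refl) (simp add: s fps_compose_add_distrib)
  moreover have "fps_cong (2 * n + 2) (g * (a oo f)) (g * a)"
    using fps_cong_mult[OF fps_cong_refl fps_cong_compose_right[OF f, of a]] by simp
  ultimately show ?thesis
    by (metis fps_cong_sym fps_cong_trans mult.commute)
qed

lemma fps_bit_compose_commute_cong:
  fixes f h :: "bit fps"
  assumes f: "fps_cong (2 * k) f fps_X" and k: "k \<ge> 1"
    and h0: "h $ 0 = 0" and h1: "h $ 1 = 1"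
  shows "fps_cong (2 * k + 2) (f oo h) (h oo f)"
proof -
  obtain t where "f = fps_X + fps_X ^ (2 * k) * t"
    using f by (rule fps_congE)
  moreover define d where "d = fps_X ^ (2 * k) * t"
  ultimately have fd: "f = fps_X + d"
    by simp
  have f0: "f $ 0 = 0"
    using f k by (simp add: fps_cong_def)
  have "fps_cong (2 * k + 2) (h + (d oo h)) (h + d)"
    unfolding d_def by (intro fps_cong_add fps_cong_refl fps_bit_compose_X_even_power_mult_cong h0 h1)
  then have fh: "fps_cong (2 * k + 2) (f oo h) (h + d)"
    using h0 by (simp add: fd fps_compose_add_distrib)
  obtain r where r: "h = fps_X + fps_X ^ 2 * r"
    using fps_cong_2_X[OF h0 h1] by (rule fps_congE)
  have "h oo f = f + f ^ 2 * (r oo f)"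
    using f0 by (simp add: r fps_compose_add_distrib fps_compose_mult_distrib fps_X_power_compose)
  also have "f ^ 2 = fps_X ^ 2 + d ^ 2"
    by (simp add: fd fps_bit_add_square)
  finally have hf: "h oo f = f + fps_X ^ 2 * (r oo f) + d ^ 2 * (r oo f)"
    by (simp add: algebra_simps)
  have "fps_cong (2 + 2 * k) (fps_X ^ 2 * (r oo f)) (fps_X ^ 2 * (r oo fps_X))"
    using f by (intro fps_cong_X_power_mult fps_cong_compose_right)
  then have r_part: "fps_cong (2 * k + 2) (fps_X ^ 2 * (r oo f)) (fps_X ^ 2 * r)"
    by (simp add: add.commute)
  have "fps_cong (2 * k) d 0"
    using fps_cong_add_X_power_mult[of "2 * k" 0 t] by (simp add: d_def)
  then have "fps_cong (2 * k + 2 * k) (d * d) 0"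
    using fps_cong_zero_mult by blast
  then have "fps_cong (2 * k + 2) (d ^ 2) 0"
    unfolding power2_eq_square by (rule fps_cong_mono) (use k in simp)
  then have d_part: "fps_cong (2 * k + 2) (d ^ 2 * (r oo f)) 0"
    using fps_cong_mult[OF _ fps_cong_refl] by fastforce
  have "fps_cong (2 * k + 2) (h oo f) (f + fps_X ^ 2 * r + 0)"
    unfolding hf by (intro fps_cong_add r_part d_part fps_cong_refl)
  then have "fps_cong (2 * k + 2) (h oo f) (h + d)"
    by (simp add: fd r algebra_simps)
  then show ?thesis
    using fh by (metis fps_cong_sym fps_cong_trans)
qed

lemma commutator_in_riordan_level:
  assumes x: "x \<in> riordan_level (2 * n)" and y: "y \<in> carrier riordan"
  shows "commutator x y \<in> riordan_level (2 * n + 2)"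
proof -
  obtain g f where x': "x = (g, f)" and xC: "x \<in> carrier riordan"
    and g: "fps_cong (2 * n) g 1" and f: "fps_cong (2 * n + 2) f fps_X"
    using x by (auto simp: riordan_level_def)
  obtain a h where y': "y = (a, h)" and h0: "h $ 0 = 0" and h1: "h $ 1 = 1"
    using y by (cases y) (auto simp: riordan_carrier_iff)
  have yx: "y \<otimes>\<^bsub>riordan\<^esub> x = (a * (g oo h), f oo h)"
    and xy: "x \<otimes>\<^bsub>riordan\<^esub> y = (g * (a oo f), h oo f)"
    by (simp_all add: x' y' riordan_mult)
  have yxC: "(a * (g oo h), f oo h) \<in> carrier riordan"
    and xyC: "(g * (a oo f), h oo f) \<in> carrier riordan"
    using xC y by (simp_all flip: yx xy)
  have "2 * (n + 1) = 2 * n + 2" "2 * (n + 1) + 2 = 2 * n + 2 + 2"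
    by simp_all
  then have "fps_cong (2 * n + 2 + 2) (f oo h) (h oo f)"
    using fps_bit_compose_commute_cong[of "n + 1" f h] f h0 h1 by simp
  with inv_mult_in_riordan_level[OF yxC xyC fps_bit_commutator_fst_cong[OF g f h0 h1]]
  have "inv\<^bsub>riordan\<^esub> (y \<otimes>\<^bsub>riordan\<^esub> x) \<otimes>\<^bsub>riordan\<^esub> (x \<otimes>\<^bsub>riordan\<^esub> y)
      \<in> riordan_level (2 * n + 2)"
    by (simp add: yx xy)
  then show ?thesis
    using commutator_eq_inv_mult[OF xC y] by simp
qed

lemma lcs_subset_riordan_level: "lcs n \<subseteq> riordan_level (2 * n)"
proof (induction n)
  case 0
  show ?case
  proof
    fix p assume "p \<in> lcs 0"
    then obtain g f where "p = (g, f)" "p \<in> carrier riordan" "f $ 0 = 0" "f $ 1 = 1"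
      by (cases p) (auto simp: riordan_carrier_iff)
    then show "p \<in> riordan_level (2 * 0)"
      using fps_cong_2_X[of f] by (simp add: riordan_level_def fps_cong_def[of 0] numeral_2_eq_2)
  qed
next
  case (Suc n)
  have "riordan_level (2 * n + 2) \<in> {H. subgroup H riordan \<and> tadic_closed H \<and>
            {commutator x y | x y. x \<in> lcs n \<and> y \<in> carrier riordan} \<subseteq> H}"
    using Suc.IH commutator_in_riordan_level
    by (auto simp: subgroup_riordan_level tadic_closed_riordan_level)
  then have "comm_sub (lcs n) (carrier riordan) \<subseteq> riordan_level (2 * n + 2)"
    unfolding comm_sub_def by (rule Inter_lower)
  then show ?case
    by simp
qed

section \<open>Appell elements are limits of commutators\<close>

lemma fps_bit_one_plus_X_power_odd_power:
  assumes "odd m"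
  shows "fps_cong (2 * j) ((1 + fps_X ^ j) ^ m) (1 + fps_X ^ j :: bit fps)"
proof -
  obtain q where m: "m = Suc (2 * q)"
    using assms by (metis oddE Suc_eq_plus1)
  have "(1 + fps_X ^ j) ^ 2 = (1 :: bit fps) + fps_X ^ (2 * j)"
    by (simp add: fps_bit_add_square mult.commute flip: power_mult)
  moreover have "fps_cong (2 * j) (((1 :: bit fps) + fps_X ^ (2 * j) * 1) ^ q) 1"
    using fps_cong_power[OF fps_cong_add_X_power_mult, of "2 * j" 1 1 q] by simp
  then have "fps_cong (2 * j) ((1 + fps_X ^ j) * ((1 :: bit fps) + fps_X ^ (2 * j) * 1) ^ q)
                              ((1 + fps_X ^ j) * 1)"
    by (rule fps_cong_mult[OF fps_cong_refl])
  ultimately show ?thesis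
    by (simp add: m power_mult)
qed

lemma fps_bit_appell_generator_compose:
  assumes m: "odd m" and mN: "m < N"
  shows "fps_cong (N + 1) ((1 + fps_X ^ m) oo (fps_X + fps_X ^ (N - m + 1)))
                          ((1 + fps_X ^ m) * (1 + fps_X ^ N) :: bit fps)"
proof -
  define j where "j = N - m"
  have j: "j \<ge> 1" and N: "N = m + j"
    using mN by (auto simp: j_def)
  have "fps_cong (m + 2 * j) (fps_X ^ m * (1 + fps_X ^ j) ^ m) (fps_X ^ m * (1 + fps_X ^ j :: bit fps))"
    using fps_bit_one_plus_X_power_odd_power[OF m] by (rule fps_cong_X_power_mult)
  moreover have "fps_X ^ m * (1 + fps_X ^ j) = fps_X ^ m + (fps_X ^ N :: bit fps)"
    by (simp add: N power_add algebra_simps)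
  ultimately have "fps_cong (m + 2 * j) ((fps_X * (1 + fps_X ^ j)) ^ m) (fps_X ^ m + fps_X ^ N :: bit fps)"
    by (simp only: power_mult_distrib)
  then have "fps_cong (N + 1) ((fps_X * (1 + fps_X ^ j)) ^ m) (fps_X ^ m + fps_X ^ N :: bit fps)"
    by (rule fps_cong_mono) (use j N in simp)
  then have "fps_cong (N + 1) (1 + (fps_X + fps_X ^ (j + 1)) ^ m) (1 + fps_X ^ m + fps_X ^ N :: bit fps)"
    by (simp add: algebra_simps fps_cong_add)
  moreover have "(1 + fps_X ^ m) * (1 + fps_X ^ N) =
      (1 + fps_X ^ m + fps_X ^ N) + fps_X ^ (N + 1) * (fps_X ^ (m - 1) :: bit fps)"
    using m by (cases m) (simp_all add: algebra_simps flip: power_add)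
  ultimately show ?thesis
    using fps_cong_add_X_power_mult[of "N + 1" "1 + fps_X ^ m + fps_X ^ N"]
    by (auto simp: j_def fps_compose_add_distrib fps_X_power_compose intro: fps_cong_trans fps_cong_sym)
qed

lemma fps_bit_appell_generator_compose_cancel:
  fixes u :: "bit fps" and m N :: nat
  defines "h \<equiv> fps_X + fps_X ^ (N - m + 1)"
  assumes m: "odd m" and mN: "m < N"
    and u: "((1 + fps_X ^ m) oo h) * (u oo h) = 1 + fps_X ^ m"
  shows "fps_cong (N + 1) u (1 + fps_X ^ N)"
proof -
  define a :: "bit fps" where "a = 1 + fps_X ^ m"
  define e :: "bit fps" where "e = 1 + fps_X ^ N"
  define w where "w = a oo h"
  have a0: "a $ 0 = 1"
    using m by (cases m) (simp_all add: a_def)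
  have h0: "h $ 0 = 0" and h1: "h $ 1 = 1"
    using mN by (simp_all add: h_def)
  have "fps_cong (N + 1) (w * e) (a * e * e)"
    using fps_bit_appell_generator_compose[OF m mN] fps_cong_mult[OF _ fps_cong_refl]
    by (simp add: w_def a_def e_def h_def)
  also have "a * e * e = a + fps_X ^ (N + 1) * (a * fps_X ^ (N - 1))"
  proof -
    have "e * e = 1 + fps_X ^ (N * 2)"
      by (simp add: e_def fps_bit_add_square flip: power2_eq_square power_mult)
    also have "N * 2 = N + 1 + (N - 1)"
      using mN by simp
    finally have "e * e = 1 + fps_X ^ (N + 1) * fps_X ^ (N - 1)"
      by (simp only: power_add)
    then show ?thesis
      by (simp add: mult.assoc algebra_simps)
  qed
  also have "fps_cong (N + 1) \<dots> a"
    by (rule fps_cong_add_X_power_mult)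
  finally have "fps_cong (N + 1) (w * e) (w * (u oo h))"
    using u by (simp add: w_def a_def)
  then have "fps_cong (N + 1) (w * (u oo h)) (w * e)"
    by (rule fps_cong_sym)
  then have "fps_cong (N + 1) (u oo h) e"
    using fps_cong_mult_cancel[of w] a0 h0 by (simp add: w_def)
  moreover have "fps_cong (N + 1) (e oo h) e"
    using fps_compose_X_power_mult_cong[OF h0 h1, of N 1]
    by (simp add: e_def fps_compose_add_distrib fps_cong_add)
  ultimately have "fps_cong (N + 1) (u oo h) (e oo h)"
    by (metis fps_cong_sym fps_cong_trans)
  then show ?thesis
    using fps_cong_compose_cancel[OF h0] h1 by (simp add: e_def)
qed

lemma commutator_appell_generator:
  assumes m: "odd m" and mN: "m < N"
  obtains y u where "y \<in> carrier riordan"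
    and "commutator (1 + fps_X ^ m, fps_X) y = (u, fps_X)"
    and "fps_cong (N + 1) u (1 + fps_X ^ N)"
proof -
  define a :: "bit fps" where "a = 1 + fps_X ^ m"
  define h :: "bit fps" where "h = fps_X + fps_X ^ (N - m + 1)"
  have h0: "h $ 0 = 0" and h1: "h $ 1 = 1"
    using mN by (simp_all add: h_def)
  have xC: "(a, fps_X) \<in> carrier riordan"
    using m by (cases m) (simp_all add: a_def riordan_carrier_iff)
  have yC: "(1, h) \<in> carrier riordan"
    using h0 h1 by (simp add: riordan_carrier_iff)
  obtain u v where c: "commutator (a, fps_X) (1, h) = (u, v)"
    by (metis surj_pair)
  then have c': "inv\<^bsub>riordan\<^esub> (a oo h, h) \<otimes>\<^bsub>riordan\<^esub> (a, h) = (u, v)"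
    using commutator_eq_inv_mult[OF xC yC] h0 by (simp add: riordan_mult)
  have "(a oo h, h) \<in> carrier riordan" "(a, h) \<in> carrier riordan"
    using R.m_closed[OF yC xC] R.m_closed[OF xC yC] h0 by (simp_all add: riordan_mult)
  note eqs = riordan_inv_mult_eqD[OF this c']
  have "v oo h = fps_X oo h"
    using eqs(2) h0 by simp
  then have "v = fps_X"
    using fps_compose_inj_right[OF h0] h1 by simp
  moreover have "fps_cong (N + 1) u (1 + fps_X ^ N)"
    using fps_bit_appell_generator_compose_cancel[OF m mN] eqs(1) by (simp add: a_def h_def)
  ultimately show thesis
    using that yC c by (simp add: a_def)
qed

lemma fps_bit_mult_fixes_coeff:
  fixes s u g :: "bit fps"
  assumes s: "fps_cong M s g" and sM: "s $ M \<noteq> g $ M" and s0: "s $ 0 = 1"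
    and u: "fps_cong (M + 1) u (1 + fps_X ^ M)"
  shows "fps_cong (M + 1) (s * u) g"
proof -
  have "fps_cong (M + 1) (s * u) (s * (1 + fps_X ^ M))"
    using u by (rule fps_cong_mult[OF fps_cong_refl])
  also have "s * (1 + fps_X ^ M) = s + fps_X ^ M * s"
    by (simp add: algebra_simps)
  also have "fps_cong (M + 1) \<dots> (s + fps_X ^ M * 1)"
    using fps_cong_X_power_mult[of 1 s 1 M] s0
    by (intro fps_cong_add fps_cong_refl) (simp add: fps_cong_def)
  also have "fps_cong (M + 1) \<dots> g"
    \<comment> \<open>Adding \<open>t\<^sup>M\<close> flips the one wrong coefficient.\<close>
  proof -
    have "fps_cong M (s + fps_X ^ M * 1) g"
      using fps_cong_add_X_power_mult s by (rule fps_cong_trans)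
    moreover have "(s + fps_X ^ M * 1) $ M = g $ M"
      using bit_neq_imp_add_one[OF sM] by simp
    ultimately show ?thesis
      by (simp add: fps_cong_Suc)
  qed
  finally show ?thesis .
qed

lemma subgroup_approximates_appell:
  assumes H: "subgroup H riordan"
    and gen: "\<And>N. m < N \<Longrightarrow> \<exists>u. (u, fps_X) \<in> H \<and> fps_cong (N + 1) u (1 + fps_X ^ N)"
    and g: "fps_cong (m + 1) 1 g"
  shows "\<exists>s. (s, fps_X) \<in> H \<and> fps_cong (m + 1 + d) s g"
proof (induction d)
  case 0
  have "(1, fps_X) \<in> H"
    using subgroup.one_closed[OF H] by (simp add: riordan_one)
  then show ?case
    using g by auto
next
  case (Suc d)
  define M where "M = m + 1 + d"
  obtain s where sH: "(s, fps_X) \<in> H" and s: "fps_cong M s g"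
    using Suc.IH by (auto simp: M_def)
  show ?case
  proof (cases "s $ M = g $ M")
    case True
    then show ?thesis
      using sH s by (auto simp: M_def fps_cong_Suc)
  next
    case False
    obtain u where uH: "(u, fps_X) \<in> H" and u: "fps_cong (M + 1) u (1 + fps_X ^ M)"
      using gen[of M] by (auto simp: M_def)
    have "(s, fps_X) \<otimes>\<^bsub>riordan\<^esub> (u, fps_X) \<in> H"
      using sH uH by (rule subgroup.m_closed[OF H])
    moreover have "s $ 0 = 1"
      using s g by (auto simp: M_def fps_cong_def)
    ultimately show ?thesis
      using fps_bit_mult_fixes_coeff[OF s False _ u] by (auto simp: M_def riordan_mult)
  qed
qed

lemma appell_subset_closed_subgroup:
  assumes H: "subgroup H riordan" and closed: "tadic_closed H"
    and gen: "\<And>N. m < N \<Longrightarrow> \<exists>u. (u, fps_X) \<in> H \<and> fps_cong (N + 1) u (1 + fps_X ^ N)"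
  shows "appell m \<subseteq> H"
proof
  fix b assume "b \<in> appell m"
  then obtain g where b: "b = (g, fps_X)" and g: "fps_cong (m + 1) 1 g"
    by (auto simp: appell_def fps_cong_def)
  have bC: "b \<in> carrier riordan"
    using g by (auto simp: b riordan_carrier_iff fps_cong_def)
  have "\<exists>s\<in>H. \<forall>i<M. fst s $ i = fst b $ i \<and> snd s $ i = snd b $ i" for M
  proof -
    obtain s where "(s, fps_X) \<in> H" "fps_cong (m + 1 + M) s g"
      using subgroup_approximates_appell[OF H gen g] by blast
    then show ?thesis
      by (intro bexI[of _ "(s, fps_X)"]) (auto simp: b fps_cong_def)
  qed
  then show "b \<in> H"
    using closed bC by (auto simp: tadic_closed_def)
qed

lemma appell_subset_comm_sub:
  assumes m: "odd m" and S: "(1 + fps_X ^ m, fps_X) \<in> S"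
  shows "appell m \<subseteq> comm_sub S (carrier riordan)"
  unfolding comm_sub_def
proof (rule Inter_greatest)
  fix H assume "H \<in> {H. subgroup H riordan \<and> tadic_closed H \<and>
                   {commutator x y |x y. x \<in> S \<and> y \<in> carrier riordan} \<subseteq> H}"
  then have H: "subgroup H riordan" "tadic_closed H"
    and comm: "\<And>y. y \<in> carrier riordan \<Longrightarrow> commutator (1 + fps_X ^ m, fps_X) y \<in> H"
    using S by blast+
  show "appell m \<subseteq> H"
  proof (rule appell_subset_closed_subgroup[OF H])
    fix N assume "m < N"
    then obtain y u where "y \<in> carrier riordan" "commutator (1 + fps_X ^ m, fps_X) y = (u, fps_X)"
      "fps_cong (N + 1) u (1 + fps_X ^ N)"
      by (rule commutator_appell_generator[OF m])
    then show "\<exists>u. (u, fps_X) \<in> H \<and> fps_cong (N + 1) u (1 + fps_X ^ N)"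
      using comm by metis
  qed
qed

lemma appell_subset_lcs: "appell (2 * k + 1) \<subseteq> lcs (Suc k)"
proof (induction k)
  case 0
  have "(1 + fps_X ^ 1, fps_X) \<in> carrier riordan"
    by (simp add: riordan_carrier_iff)
  from appell_subset_comm_sub[OF _ this] show ?case
    by simp
next
  case (Suc k)
  have "(1 + fps_X ^ (2 * k + 3), fps_X) \<in> appell (2 * k + 1)"
    by (auto simp: appell_def)
  with Suc.IH have "(1 + fps_X ^ (2 * k + 3), fps_X) \<in> lcs (Suc k)"
    by blast
  from appell_subset_comm_sub[OF _ this] have "appell (2 * k + 3) \<subseteq> lcs (Suc (Suc k))"
    by simp
  moreover have "2 * Suc k + 1 = 2 * k + 3"
    by simp
  ultimately show ?case
    by (simp only:)
qed

theorem corollary11: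
  fixes n :: nat
  assumes "n \<ge> 2"
  shows "appell (2 * n - 3) \<inter> gamma (n + 1) = appell (2 * n - 1)"
proof -
  obtain k where k: "n = Suc k"
    using assms by (cases n) auto
  have "gamma (n + 1) = lcs n"
    by (simp add: gamma_def)
  moreover have "appell (2 * n - 1) \<subseteq> lcs n"
    using appell_subset_lcs[of k] by (simp add: k)
  moreover have "appell (2 * n - 1) \<subseteq> appell (2 * n - 3)"
    by (auto simp: appell_def)
  moreover have "appell (2 * n - 3) \<inter> lcs n \<subseteq> appell (2 * n - 1)"
  proof
    fix x assume x: "x \<in> appell (2 * n - 3) \<inter> lcs n"
    then obtain g where xg: "x = (g, fps_X)"
      by (auto simp: appell_def)
    have "x \<in> riordan_level (2 * n)"
      using x lcs_subset_riordan_level by blast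
    then show "x \<in> appell (2 * n - 1)"
      using assms by (auto simp: xg riordan_level_def appell_def fps_cong_def)
  qed
  ultimately show ?thesis
    by blast
qed

end
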